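(* In the setting below, suppose the tight disturbance bound assumption and the persistent excitation assumption hold. Then for all $t\in\mathbb{N}_{\ge0}$, all $\epsilon>0$, and every $\theta\in\mathbb{R}^p$ with $\|\theta^\ast-\theta\|\ge\epsilon$, there exists $j\in\{t+1,\dots,t+N_u\}$ such that $$\Pr\{\theta\notin\Delta_j\}\ \ge\ p_w\bigl(\epsilon\sqrt{\beta/N_u}\bigr).$$
   Context: Setting: $\theta^\ast\in\mathbb{R}^p$ is a fixed (unknown) parameter vector. $\mathcal{W}=\{w\in\mathbb{R}^{n_x}:\Pi_w w\le\pi_w\}$ is a compact convex polytope with $\pi_w>0$. The disturbances $w_0,w_1,\dots$ are independent random vectors with $w_t\in\mathcal{W}$ for all $t$. $D_0,D_1,\dots\in\mathbb{R}^{n_x\times p}$ is a given (non-random) sequence of regressor matrices. For $t\ge1$ the (random) unfalsified parameter set is $\Delta_t=\{\theta\in\mathbb{R}^p: D_{t-1}(\theta^\ast-\theta)+w_{t-1}\in\mathcal{W}\}$. $\|\cdot\|$ is the Euclidean norm (induced 2-norm for matrices); $\partial\mathcal{W}$ is the boundary of $\mathcal{W}$. Tight disturbance bound assumption: there is a function $p_w:(0,\infty)\to(0,1]$ such that for all $w^0\in\partial\mathcal{W}$, all $\epsilon>0$ and all $t\ge0$, $\Pr\{\|w_t-w^0\|<\epsilon\}\ge p_w(\epsilon)$. Persistent excitation assumption: there exist $\tau>0$, $\beta>0$ and an integer $N_u\ge\lceil p/n_x\rceil$ such that for every $t\ge0$, $\|D_t\|\le\tau$ and $\sum_{j=t}^{t+N_u-1}D_j^\top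 D_j\succeq\beta I$. *)

theory Defs
  imports "HOL-Probability.Probability"
begin

definition polytope :: "real^'n^'m \<Rightarrow> real^'m \<Rightarrow> (real^'n) set" where
  "polytope Pw pw = {w. \<forall>i. (Pw *v w) $ i \<le> pw $ i}"

text \<open>Unfalsified parameter set Delta_t for t >= 1, at outcome omega.\<close>
definition unfalsified ::
  "(real^'n) set \<Rightarrow> (nat \<Rightarrow> real^'p^'n) \<Rightarrow> ('o \<Rightarrow> nat \<Rightarrow> real^'n) \<Rightarrow> real^'p \<Rightarrow> nat \<Rightarrow> 'o \<Rightarrow> (real^'p) set" where
  "unfalsified W D w \<theta>s t \<omega> = {\<theta>. D (t - 1) *v (\<theta>s - \<theta>) + w \<omega> (t - 1) \<in> W}"

end

theory Submission
  imports Defs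
begin

text \<open>
  Persistent excitation spreads the energy \<open>\<beta> \<parallel>\<theta>\<^sup>* - \<theta>\<parallel>\<^sup>2\<close> of the parameter error over \<open>N\<^sub>u\<close>
  consecutive regressors, so some \<open>v = D\<^sub>j (\<theta>\<^sup>* - \<theta>)\<close> has norm at least
  \<open>\<delta> = \<epsilon> sqrt (\<beta> / N\<^sub>u)\<close>. Let \<open>w\<^sub>0\<close> maximise \<open>v \<bullet> _\<close> over the compact set \<open>\<W>\<close>; it lies on the
  boundary of \<open>\<W>\<close>. Whenever the disturbance \<open>w\<^sub>j\<close> lands within \<open>\<delta>\<close> of \<open>w\<^sub>0\<close>, the shifted point
  \<open>v + w\<^sub>j\<close> overshoots the supporting hyperplane at \<open>w\<^sub>0\<close>, so \<open>\<theta>\<close> is falsified at time \<open>j + 1\<close>;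
  by the tight bound assumption this happens with probability at least \<open>p\<^sub>w \<delta>\<close>.
\<close>

lemma sum_matrix_vector_mult:
  "finite S \<Longrightarrow> sum A S *v (x :: real^'n) = (\<Sum>j\<in>S. A j *v x)"
  by (induction S rule: finite_induct) (auto simp: matrix_vector_mult_add_rdistrib)

lemma inner_transpose_mult_self:
  "(x :: real^'p) \<bullet> ((transpose (A :: real^'p^'n) ** A) *v x) = norm (A *v x) ^ 2"
  by (metis dot_lmul_matrix matrix_vector_mul_assoc transpose_matrix_vector inner_commute
        power2_norm_eq_inner)

lemma sum_ge_imp_exists_ge_average:
  fixes f :: "'a \<Rightarrow> real"
  assumes "finite S" "S \<noteq> {}" "c \<le> sum f S"
  shows "\<exists>j\<in>S. c / card S \<le> f j"
proof (rule ccontr)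
  assume "\<not> ?thesis"
  then have "sum f S < (\<Sum>j\<in>S. c / card S)"
    using assms(1,2) by (intro sum_strict_mono) auto
  also have "\<dots> = c"
    using assms(1,2) by simp
  finally show False
    using assms(3) by simp
qed

lemma persistent_excitation_obtains_large_regressor:
  fixes D :: "nat \<Rightarrow> real^'p^'n"
  assumes PE: "\<beta> * (x \<bullet> x) \<le> x \<bullet> ((\<Sum>j=t..t+N-1. transpose (D j) ** D j) *v x)"
    and "N \<ge> 1" "\<beta> \<ge> 0" "0 \<le> \<epsilon>" "\<epsilon> \<le> norm x"
  obtains j where "j \<in> {t..t+N-1}" "\<epsilon> * sqrt (\<beta> / N) \<le> norm (D j *v x)"
proof -
  have "\<beta> * \<epsilon>\<^sup>2 \<le> \<beta> * norm x ^ 2"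
    using assms(3-5) by (intro mult_left_mono power_mono) auto
  also have "\<dots> \<le> (\<Sum>j=t..t+N-1. norm (D j *v x) ^ 2)"
    using PE by (simp add: sum_matrix_vector_mult inner_sum_right inner_transpose_mult_self
        power2_norm_eq_inner)
  finally obtain j where j: "j \<in> {t..t+N-1}" and "\<beta> * \<epsilon>\<^sup>2 / N \<le> norm (D j *v x) ^ 2"
    using sum_ge_imp_exists_ge_average[of "{t..t+N-1}"] \<open>N \<ge> 1\<close> by force
  then have "(\<epsilon> * sqrt (\<beta> / N))\<^sup>2 \<le> norm (D j *v x) ^ 2"
    using assms(3) by (simp add: power_mult_distrib mult.commute)
  then have "\<epsilon> * sqrt (\<beta> / N) \<le> norm (D j *v x)"
    using assms(3,4) by (simp add: power2_le_iff_abs_le)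
  with j show thesis
    using that by blast
qed

lemma compact_obtains_support_point_in_frontier:
  fixes W :: "'a :: real_inner set"
  assumes "compact W" "W \<noteq> {}" "v \<noteq> 0"
  obtains w0 where "w0 \<in> frontier W" "\<forall>y\<in>W. v \<bullet> y \<le> v \<bullet> w0"
proof -
  have "continuous_on W (\<lambda>y. v \<bullet> y)"
    by (intro continuous_intros)
  then obtain w0 where w0: "w0 \<in> W" and max: "\<forall>y\<in>W. v \<bullet> y \<le> v \<bullet> w0"
    using continuous_attains_sup[OF assms(1,2)] by blast
  have "w0 \<notin> interior W"
  proof
    assume "w0 \<in> interior W"
    then obtain r where "r > 0" "ball w0 r \<subseteq> W"
      by (meson mem_interior)
    moreover define y where "y = w0 + (r / 2 / norm v) *\<^sub>R v"
    ultimately have "y \<in> W"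
      using assms(3) by (auto simp: y_def dist_norm)
    moreover have "v \<bullet> y = v \<bullet> w0 + r / 2 / norm v * (v \<bullet> v)"
      by (simp add: y_def inner_add_right)
    moreover have "r / 2 / norm v * (v \<bullet> v) > 0"
      using \<open>r > 0\<close> assms(3) by simp
    ultimately show False
      using max by force
  qed
  with w0 have "w0 \<in> frontier W"
    using closure_subset by (auto simp: frontier_def)
  with max show thesis
    using that by blast
qed

lemma shift_near_support_point_notin:
  fixes v w w0 :: "'a :: real_inner"
  assumes max: "\<forall>y\<in>W. v \<bullet> y \<le> v \<bullet> w0" and near: "norm (w - w0) < norm v"
  shows "v + w \<notin> W"
proof
  assume "v + w \<in> W"
  then have "v \<bullet> v + v \<bullet> (w - w0) \<le> 0"
    using max by (force simp: inner_add_right inner_diff_right)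
  moreover have "\<bar>v \<bullet> (w - w0)\<bar> < v \<bullet> v"
  proof -
    have "\<bar>v \<bullet> (w - w0)\<bar> \<le> norm v * norm (w - w0)"
      by (rule Cauchy_Schwarz_ineq2)
    also have "\<dots> < norm v * norm v"
      using near by (intro mult_strict_left_mono) auto
    finally show ?thesis
      by (simp add: dot_square_norm power2_eq_square)
  qed
  ultimately show False
    by linarith
qed

lemma near_support_point_falsifies:
  assumes "\<forall>y\<in>W. (D j *v (\<theta>s - \<theta>)) \<bullet> y \<le> (D j *v (\<theta>s - \<theta>)) \<bullet> w0"
    and "norm (w \<omega> j - w0) < norm (D j *v (\<theta>s - \<theta>))"
  shows "\<theta> \<notin> unfalsified W D w \<theta>s (Suc j) \<omega>"
  using shift_near_support_point_notin[OF assms] by (simp add: unfalsified_def)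

lemma polytope_contains_zero:
  "(\<And>i. pw $ i \<ge> 0) \<Longrightarrow> 0 \<in> polytope Pw pw"
  by (simp add: polytope_def)

lemma falsified_event_measurable:
  assumes "closed W" "(\<lambda>\<omega>. w \<omega> j) \<in> borel_measurable M"
  shows "{\<omega> \<in> space M. \<theta> \<notin> unfalsified W D w \<theta>s (Suc j) \<omega>} \<in> sets M"
proof -
  have "(\<lambda>\<omega>. D j *v (\<theta>s - \<theta>) + w \<omega> j) \<in> borel_measurable M"
    using assms(2) by measurable
  from measurable_sets[OF this borel_closed[OF assms(1)]]
  have "space M - ((\<lambda>\<omega>. D j *v (\<theta>s - \<theta>) + w \<omega> j) -` W \<inter> space M) \<in> sets M"
    by blast
  moreover have "space M - ((\<lambda>\<omega>. D j *v (\<theta>s - \<theta>) + w \<omega> j) -` W \<inter> space M) =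
      {\<omega> \<in> space M. \<theta> \<notin> unfalsified W D w \<theta>s (Suc j) \<omega>}"
    by (auto simp: unfalsified_def)
  ultimately show ?thesis
    by simp
qed

theorem proposition2:
  fixes M :: "'o measure"
    and w :: "'o \<Rightarrow> nat \<Rightarrow> real^'nx"
    and D :: "nat \<Rightarrow> real^'p^'nx"
    and Pw :: "real^'nx^'m" and pw :: "real^'m"
    and \<theta>s :: "real^'p"
    and p_w :: "real \<Rightarrow> real"
    and \<tau> \<beta> :: real and N_u :: nat
  assumes "prob_space M"
    and meas: "\<And>t. (\<lambda>\<omega>. w \<omega> t) \<in> borel_measurable M"
    and indep: "prob_space.indep_vars M (\<lambda>_. borel) (\<lambda>t \<omega>. w \<omega> t) UNIV"
    and pw_pos: "\<And>i. pw $ i > 0"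
    and W_compact: "compact (polytope Pw pw)"
    and w_in: "\<And>t \<omega>. \<omega> \<in> space M \<Longrightarrow> w \<omega> t \<in> polytope Pw pw"
    and p_w_range: "\<And>e. e > 0 \<Longrightarrow> 0 < p_w e \<and> p_w e \<le> 1"
    and tight: "\<And>w0 e t. w0 \<in> frontier (polytope Pw pw) \<Longrightarrow> e > 0 \<Longrightarrow>
                  measure M {\<omega> \<in> space M. norm (w \<omega> t - w0) < e} \<ge> p_w e"
    and \<tau>_pos: "\<tau> > 0" and \<beta>_pos: "\<beta> > 0"
    and N_u: "N_u \<ge> nat \<lceil>real CARD('p) / real CARD('nx)\<rceil>"
    and D_bound: "\<And>t. onorm (\<lambda>x. D t *v x) \<le> \<tau>"
    and PE: "\<And>t x. x \<bullet> ((\<Sum>j=t..t+N_u-1. transpose (D j) ** D j) *v x) \<ge> \<beta> * (x \<bullet> x)"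
    and eps: "\<epsilon> > 0"
    and far: "norm (\<theta>s - \<theta>) \<ge> \<epsilon>"
  shows "\<exists>j\<in>{t+1..t+N_u}.
           measure M {\<omega> \<in> space M. \<theta> \<notin> unfalsified (polytope Pw pw) D w \<theta>s j \<omega>}
             \<ge> p_w (\<epsilon> * sqrt (\<beta> / real N_u))"
proof -
  interpret prob_space M by fact
  define W where "W = polytope Pw pw"
  define \<delta> where "\<delta> = \<epsilon> * sqrt (\<beta> / real N_u)"
  have "real CARD('p) / real CARD('nx) > 0"
    by simp
  then have "N_u \<ge> 1"
    using N_u by linarith
  then have "\<delta> > 0"
    using eps \<beta>_pos by (simp add: \<delta>_def)
  obtain j where j: "j \<in> {t..t+N_u-1}" and large: "\<delta> \<le> norm (D j *v (\<theta>s - \<theta>))"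
    using persistent_excitation_obtains_large_regressor[OF PE \<open>N_u \<ge> 1\<close>, where \<epsilon> = \<epsilon>]
      \<beta>_pos eps far
    unfolding \<delta>_def by auto
  define v where "v = D j *v (\<theta>s - \<theta>)"
  have "v \<noteq> 0"
    using large \<open>\<delta> > 0\<close> by (auto simp: v_def)
  moreover have "W \<noteq> {}"
    using polytope_contains_zero[of pw Pw] pw_pos by (auto simp: W_def less_imp_le)
  ultimately obtain w0 where "w0 \<in> frontier W" and max: "\<forall>y\<in>W. v \<bullet> y \<le> v \<bullet> w0"
    using compact_obtains_support_point_in_frontier W_compact unfolding W_def by blast
  have "{\<omega> \<in> space M. norm (w \<omega> j - w0) < \<delta>} \<subseteq>
        {\<omega> \<in> space M. \<theta> \<notin> unfalsified W D w \<theta>s (Suc j) \<omega>}"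
    using near_support_point_falsifies[where D = D and w = w and \<theta>s = \<theta>s and \<theta> = \<theta>,
        OF max[unfolded v_def]] large
    by fastforce
  then have "measure M {\<omega> \<in> space M. norm (w \<omega> j - w0) < \<delta>} \<le>
      measure M {\<omega> \<in> space M. \<theta> \<notin> unfalsified W D w \<theta>s (Suc j) \<omega>}"
    using falsified_event_measurable[OF compact_imp_closed meas] W_compact
    by (intro finite_measure_mono) (auto simp: W_def)
  with tight[OF \<open>w0 \<in> frontier W\<close>[unfolded W_def] \<open>\<delta> > 0\<close>, of j]
  have "p_w \<delta> \<le> measure M {\<omega> \<in> space M. \<theta> \<notin> unfalsified W D w \<theta>s (Suc j) \<omega>}"
    by linarith
  moreover have "Suc j \<in> {t+1..t+N_u}"
    using j \<open>N_u \<ge> 1\<close> by auto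
  ultimately show ?thesis
    unfolding W_def \<delta>_def by blast
qed

end
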